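(* For every integer $n \geq 1$, $$B_n = -\sum_{k=1}^{n} \frac{n}{k}\, S(n-1,k-1)\, B_k^*.$$
   Context: For $n \geq 0$, $X^{\underline{n}} := X(X-1)\cdots(X-n+1)$ ($X^{\underline{0}}=1$). The Stirling numbers of the second kind $S(n,k)$ are defined by $X^n = \sum_{k=0}^{n} S(n,k) X^{\underline{k}}$ for all $n\ge 0$, with $S(n,k)=0$ when $n<k$. The Bernoulli numbers $B_n$ are defined by $\frac{t}{e^t-1} = \sum_{n\ge 0} B_n \frac{t^n}{n!}$. The Bernoulli numbers of the second kind $B_n^*$ are defined by $\frac{t}{\log(1+t)} = \sum_{n \ge 0} B_n^* \frac{t^n}{n!}$ (equivalently $B_n^* = \int_0^1 x^{\underline{n}}\,dx$). *)

theory Defs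
  imports "HOL-Computational_Algebra.Formal_Power_Series" "HOL-Combinatorics.Stirling"
begin

text \<open>Bernoulli numbers: t/(e^t - 1) = sum B_n t^n/n! (so B_1 = -1/2).\<close>
definition bernoulli :: "nat \<Rightarrow> real" where
  "bernoulli n = fact n * fps_nth (fps_X / (fps_exp 1 - 1)) n"

text \<open>Bernoulli numbers of the second kind: t/log(1+t) = sum B*_n t^n/n!.
  Here fps_ln 1 is the power series of log(1+t).\<close>
definition bernoulli2 :: "nat \<Rightarrow> real" where
  "bernoulli2 n = fact n * fps_nth (fps_X / fps_ln 1) n"

end

theory Submission imports Defs begin

text \<open>The series \<open>T = e^t - 1\<close> and \<open>L = log (1 + t)\<close> are compositional inverses.
  Writing \<open>t / L = 1 + t G(t)\<close>, where \<open>G\<close> has the coefficients \<open>B*_(k+1) / (k+1)!\<close>,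
  and substituting \<open>T\<close> for \<open>t\<close> gives \<open>T / t = 1 + T G(T)\<close>, i.e. \<open>t / T = 1 - t G(T)\<close>.
  The formula is the coefficient of \<open>t^n\<close> in this identity, expanded with
  \<open>T^k = k! \<Sum>_n S(n,k) t^n / n!\<close>.\<close>

unbundle fps_syntax

lemma fps_exp_minus_one_power_nth:
  "((fps_exp (1::'a::field_char_0) - 1) ^ k) $ n = fact k * of_nat (Stirling n k) / fact n"
proof (induction n arbitrary: k)
  case 0
  then show ?case by (cases k) auto
next
  case (Suc n)
  let ?T = "fps_exp (1::'a) - 1"
  show ?case
  proof (cases k)
    case 0
    then show ?thesis by simp
  next
    case (Suc j)
    have deriv: "fps_deriv (?T ^ Suc j) = of_nat (Suc j) * ?T ^ Suc j + of_nat (Suc j) * ?T ^ j"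
    proof -
      have "fps_deriv (?T ^ Suc j) = of_nat (Suc j) * fps_deriv ?T * ?T ^ j"
        by (simp only: fps_deriv_power') simp
      also have "\<dots> = of_nat (Suc j) * (?T + 1) * ?T ^ j"
        by simp
      finally show ?thesis
        by (simp add: algebra_simps)
    qed
    have "of_nat (Suc n) * (?T ^ Suc j) $ Suc n = fps_deriv (?T ^ Suc j) $ n"
      by (simp only: fps_deriv_nth Suc_eq_plus1)
    also have "\<dots> = of_nat (Suc j) * ((?T ^ Suc j) $ n + (?T ^ j) $ n)"
      unfolding deriv fps_add_nth fps_of_nat[symmetric] fps_mult_left_const_nth
      by (simp only: distrib_left)
    also have "\<dots> = fact (Suc j) * of_nat (Stirling (Suc n) (Suc j)) / fact n"
      unfolding Suc.IH[of "Suc j"] Suc.IH[of j] Stirling.simps(4)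
      by (simp add: field_simps)
    finally show ?thesis
      using Suc by (simp add: field_simps del: power_Suc of_nat_Suc Stirling.simps)
  qed
qed

lemma fps_compose_eq_fps_X_nth_1:
  fixes L T :: "'a::comm_ring_1 fps"
  assumes "L oo T = fps_X" "T $ 0 = 0" "L $ 0 = 0"
  shows "L $ 1 * T $ 1 = 1"
proof -
  have "(L oo T) $ 1 = L $ 1 * T $ 1"
    using assms(3) by (simp add: fps_compose_nth)
  then show ?thesis
    using assms(1) by simp
qed

lemma fps_X_divide_mult_cancel:
  fixes g :: "'a::field fps"
  assumes "g $ 0 = 0" "g $ 1 \<noteq> 0"
  shows "fps_X / g * g = fps_X"
proof -
  have "subdegree g = 1"
    by (rule subdegreeI) (use assms in auto)
  moreover have "g \<noteq> 0"
    using assms(2) by auto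
  ultimately have "g dvd fps_X"
    by (simp add: fps_dvd_iff)
  then show ?thesis
    by simp
qed

lemma fps_X_divide_compose_inverse:
  fixes L T :: "'a::field fps"
  assumes "L oo T = fps_X" and T0: "T $ 0 = 0" and L0: "L $ 0 = 0"
  shows "(fps_X / L) oo T = fps_shift 1 T"
proof -
  have "L $ 1 \<noteq> 0"
    using fps_compose_eq_fps_X_nth_1[OF assms] by auto
  then have "((fps_X / L) oo T) * fps_X = (fps_X / L * L) oo T"
    using assms by (simp add: fps_compose_mult_distrib)
  also have "\<dots> = fps_shift 1 T * fps_X"
    using T0 L0 \<open>L $ 1 \<noteq> 0\<close> by (auto simp: fps_X_divide_mult_cancel fps_eq_iff)
  finally show ?thesis
    by (simp add: mult_right_cancel)
qed

lemma fps_X_divide_eq_one_minus_shift_compose: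
  fixes L T :: "'a::field fps"
  assumes LT: "L oo T = fps_X" and T0: "T $ 0 = 0" and L0: "L $ 0 = 0" and L1: "L $ 1 = 1"
  shows "fps_X / T = 1 - fps_X * (fps_shift 1 (fps_X / L) oo T)"
proof -
  define G where "G = fps_shift 1 (fps_X / L)"
  define B where "B = fps_X / T"
  have "T $ 1 = 1"
    using fps_compose_eq_fps_X_nth_1[OF LT T0 L0] L1 by simp
  then have BT: "B * T = fps_X"
    using T0 by (simp add: B_def fps_X_divide_mult_cancel)
  have "(fps_X / L * L) $ 1 = (fps_X / L) $ 0"
    using L0 L1 by (simp add: fps_mult_nth)
  moreover have "fps_X / L * L = fps_X"
    using L0 L1 by (simp add: fps_X_divide_mult_cancel)
  ultimately have "(fps_X / L) $ 0 = 1"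
    by simp
  then have "fps_X / L = 1 + fps_X * G"
    by (auto simp: G_def fps_eq_iff nat.case_eq_if)
  then have "1 + T * (G oo T) = fps_shift 1 T"
    using fps_X_divide_compose_inverse[OF LT T0 L0] T0
    by (simp add: fps_compose_add_distrib fps_compose_mult_distrib)
  moreover have "fps_shift 1 T * fps_X = T"
    using T0 by (simp add: fps_eq_iff)
  ultimately have "B * (1 + T * (G oo T)) * fps_X = B * T"
    by (simp add: mult.assoc)
  moreover have "B * (1 + T * (G oo T)) = B + fps_X * (G oo T)"
    using BT by (simp add: distrib_left flip: mult.assoc)
  ultimately have "(B + fps_X * (G oo T)) * fps_X = 1 * fps_X"
    using BT by simp
  then show ?thesis
    unfolding B_def G_def by (simp only: mult_right_cancel fps_X_neq_zero eq_diff_eq) simp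
qed

lemma fps_ln_compose_fps_exp_minus_one:
  "fps_ln (1::'a::field_char_0) oo (fps_exp 1 - 1) = fps_X"
  using fps_inv[of "fps_exp (1::'a) - 1"] by (simp add: fps_ln_fps_exp_inv)

lemma bernoulli_Suc_eq_sum:
  "bernoulli (Suc m) =
    - (\<Sum>i\<le>m. real (Suc m) / real (Suc i) * real (Stirling m i) * bernoulli2 (Suc i))"
proof -
  let ?T = "fps_exp (1::real) - 1"
  let ?G = "fps_shift 1 (fps_X / fps_ln 1) :: real fps"
  have "fps_X / ?T = 1 - fps_X * (?G oo ?T)"
    by (rule fps_X_divide_eq_one_minus_shift_compose)
       (simp_all add: fps_ln_compose_fps_exp_minus_one fps_ln_nth)
  then have "(fps_X / ?T) $ Suc m = - (\<Sum>i\<le>m. ?G $ i * (?T ^ i) $ m)"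
    by (simp add: fps_compose_nth atLeast0AtMost)
  then have "bernoulli (Suc m) = - (\<Sum>i\<le>m. fact (Suc m) *
      (bernoulli2 (Suc i) / fact (Suc i) * (fact i * real (Stirling m i) / fact m)))"
    by (simp add: bernoulli_def bernoulli2_def fps_exp_minus_one_power_nth sum_distrib_left)
  also have "\<dots> = - (\<Sum>i\<le>m. real (Suc m) / real (Suc i) * real (Stirling m i) * bernoulli2 (Suc i))"
    by (intro arg_cong[where f = uminus] sum.cong refl) (simp add: field_simps del: of_nat_Suc)
  finally show ?thesis .
qed

theorem corollary1:
  fixes n :: nat
  assumes "n \<ge> 1"
  shows "bernoulli n =
    - (\<Sum>k=1..n. (real n / real k) * real (Stirling (n - 1) (k - 1)) * bernoulli2 k)"
proof -
  obtain m where n: "n = Suc m"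
    using assms by (cases n) auto
  have "(\<Sum>k=1..n. (real n / real k) * real (Stirling (n - 1) (k - 1)) * bernoulli2 k) =
      (\<Sum>i\<le>m. real (Suc m) / real (Suc i) * real (Stirling m i) * bernoulli2 (Suc i))"
    unfolding n One_nat_def sum.shift_bounds_cl_Suc_ivl atLeast0AtMost by simp
  then show ?thesis
    by (simp add: n bernoulli_Suc_eq_sum)
qed

end
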